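(* For $m\ge1$ let $G_m=P_{4m} \times P_{3m}$. Then $\dim_{1,f}(G_m)=\Theta(m^2)$ as $m\to\infty$.
   Context: $P_n$ is the path on $n$ vertices and $\times$ denotes the Cartesian product, so $P_s\times P_t$ is the $s\times t$ grid graph. $d(x,y)$ is the distance in $G$. $d_1(x,y)=\min\{d(x,y),2\}$ and $R_1\{x,y\}=\{z\in V(G): d_1(x,z)\neq d_1(y,z)\}$. For a function $g$ on $V(G)$ and $U\subseteq V(G)$, $g(U)=\sum_{s\in U}g(s)$. A function $h:V(G)\to[0,1]$ is a $1$-truncated resolving function of $G$ if $h(R_1\{x,y\})\ge 1$ for all distinct $x,y\in V(G)$; $\dim_{1,f}(G)$ is the minimum of $h(V(G))$ over all such $h$. $f=\Theta(g)$ means there are positive constants $c_1,c_2,N$ with $c_1|g(m)|\le|f(m)|\le c_2|g(m)|$ for all $m>N$. *)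

theory Defs
  imports Complex_Main
begin

text \<open>A graph is given by a vertex set V and a symmetric adjacency relation E.\<close>

definition path_graph_V :: "nat \<Rightarrow> nat set" where
  "path_graph_V n = {0..<n}"

definition path_graph_E :: "nat \<Rightarrow> nat \<Rightarrow> bool" where
  "path_graph_E a b \<longleftrightarrow> a + 1 = b \<or> b + 1 = a"

definition cart_V :: "'a set \<Rightarrow> 'b set \<Rightarrow> ('a \<times> 'b) set" where
  "cart_V V1 V2 = V1 \<times> V2"

definition cart_E :: "('a \<Rightarrow> 'a \<Rightarrow> bool) \<Rightarrow> ('b \<Rightarrow> 'b \<Rightarrow> bool)
    \<Rightarrow> ('a \<times> 'b) \<Rightarrow> ('a \<times> 'b) \<Rightarrow> bool" where
  "cart_E E1 E2 x y \<longleftrightarrow>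
     (fst x = fst y \<and> E2 (snd x) (snd y)) \<or> (snd x = snd y \<and> E1 (fst x) (fst y))"

definition grid_V :: "nat \<Rightarrow> nat \<Rightarrow> (nat \<times> nat) set" where
  "grid_V s t = cart_V (path_graph_V s) (path_graph_V t)"

definition grid_E :: "(nat \<times> nat) \<Rightarrow> (nat \<times> nat) \<Rightarrow> bool" where
  "grid_E = cart_E path_graph_E path_graph_E"

text \<open>Graph distance: length of a shortest walk within V (graphs here are connected).\<close>

definition gdist :: "'a set \<Rightarrow> ('a \<Rightarrow> 'a \<Rightarrow> bool) \<Rightarrow> 'a \<Rightarrow> 'a \<Rightarrow> nat" where
  "gdist V E x y = (LEAST k. \<exists>p. length p = Suc k \<and> hd p = x \<and> last p = y \<and>
      set p \<subseteq> V \<and> (\<forall>i<k. E (p ! i) (p ! Suc i)))"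

definition tdist1 :: "'a set \<Rightarrow> ('a \<Rightarrow> 'a \<Rightarrow> bool) \<Rightarrow> 'a \<Rightarrow> 'a \<Rightarrow> nat" where
  "tdist1 V E x y = min (gdist V E x y) 2"

definition R1 :: "'a set \<Rightarrow> ('a \<Rightarrow> 'a \<Rightarrow> bool) \<Rightarrow> 'a \<Rightarrow> 'a \<Rightarrow> 'a set" where
  "R1 V E x y = {z \<in> V. tdist1 V E x z \<noteq> tdist1 V E y z}"

definition trunc1_resolving_fun :: "'a set \<Rightarrow> ('a \<Rightarrow> 'a \<Rightarrow> bool) \<Rightarrow> ('a \<Rightarrow> real) \<Rightarrow> bool" where
  "trunc1_resolving_fun V E h \<longleftrightarrow>
     (\<forall>z\<in>V. 0 \<le> h z \<and> h z \<le> 1) \<and>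
     (\<forall>x\<in>V. \<forall>y\<in>V. x \<noteq> y \<longrightarrow> sum h (R1 V E x y) \<ge> 1)"

text \<open>Fractional 1-truncated metric dimension (the minimum is attained; we take the infimum).\<close>

definition frac_trunc1_dim :: "'a set \<Rightarrow> ('a \<Rightarrow> 'a \<Rightarrow> bool) \<Rightarrow> real" where
  "frac_trunc1_dim V E = Inf {sum h V | h. trunc1_resolving_fun V E h}"

end

theory Submission imports Defs begin

(* Each vertex x lies in R_1{x,y}, so the constant function 1 is resolving and
   dim_{1,f}(G) <= |V(G)| = 12 m^2.  Conversely, R_1{x,y} is contained in the union of the
   closed neighbourhoods of x and y.  Tile P_{4m} x P_{3m} by m^2 blocks of size 4 x 3: each
   block contains the closed neighbourhoods of its two adjacent central vertices, so a
   resolving function has mass at least 1 on every block and total mass at least m^2. *)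

definition walk :: "'a set \<Rightarrow> ('a \<Rightarrow> 'a \<Rightarrow> bool) \<Rightarrow> 'a \<Rightarrow> 'a \<Rightarrow> nat \<Rightarrow> bool" where
  "walk V E x y k \<longleftrightarrow> (\<exists>p. length p = Suc k \<and> hd p = x \<and> last p = y \<and>
      set p \<subseteq> V \<and> (\<forall>i<k. E (p ! i) (p ! Suc i)))"

definition graph_connected :: "'a set \<Rightarrow> ('a \<Rightarrow> 'a \<Rightarrow> bool) \<Rightarrow> bool" where
  "graph_connected V E \<longleftrightarrow> (\<forall>x\<in>V. \<forall>y\<in>V. \<exists>k. walk V E x y k)"

lemma gdist_eq_Least_walk: "gdist V E x y = (LEAST k. walk V E x y k)"
  unfolding gdist_def walk_def by simp

lemma walk_refl: "x \<in> V \<Longrightarrow> walk V E x x 0"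
  unfolding walk_def by (rule exI[of _ "[x]"]) simp

lemma walk_snoc:
  assumes "walk V E x y k" "E y z" "z \<in> V"
  shows "walk V E x z (Suc k)"
proof -
  obtain p where p: "length p = Suc k" "hd p = x" "last p = y" "set p \<subseteq> V"
    "\<forall>i<k. E (p ! i) (p ! Suc i)" using assms(1) unfolding walk_def by blast
  have "p \<noteq> []" using p(1) by auto
  then have "p ! k = y" using p(1,3) by (simp add: last_conv_nth)
  then have "\<forall>i<Suc k. E ((p @ [z]) ! i) ((p @ [z]) ! Suc i)"
    using p(1,5) assms(2) by (auto simp: nth_append less_Suc_eq)
  then show ?thesis
    unfolding walk_def using p \<open>p \<noteq> []\<close> assms(3) by (intro exI[of _ "p @ [z]"]) auto
qed

lemma walk_0_imp_eq: "walk V E x y 0 \<Longrightarrow> x = y"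
  unfolding walk_def by (auto simp: length_Suc_conv)

lemma walk_1_imp_edge: "walk V E x y 1 \<Longrightarrow> E x y"
  unfolding walk_def by (auto simp: length_Suc_conv)

lemma walk_gdist:
  assumes "graph_connected V E" "x \<in> V" "y \<in> V"
  shows "walk V E x y (gdist V E x y)"
proof -
  obtain k where "walk V E x y k" using assms unfolding graph_connected_def by blast
  then show ?thesis unfolding gdist_eq_Least_walk by (rule LeastI)
qed

lemma gdist_self: "x \<in> V \<Longrightarrow> gdist V E x x = 0"
  unfolding gdist_eq_Least_walk using walk_refl by (metis Least_eq_0)

lemma gdist_pos:
  assumes "graph_connected V E" "x \<in> V" "y \<in> V" "x \<noteq> y"
  shows "gdist V E x y \<noteq> 0"
proof
  assume "gdist V E x y = 0"
  then have "walk V E x y 0" using walk_gdist[OF assms(1-3)] by simp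
  then have "x = y" by (rule walk_0_imp_eq)
  with assms(4) show False ..
qed

lemma gdist_ge_2:
  assumes "graph_connected V E" "x \<in> V" "y \<in> V" "x \<noteq> y" "\<not> E x y"
  shows "2 \<le> gdist V E x y"
proof -
  have "gdist V E x y \<noteq> 1"
  proof
    assume "gdist V E x y = 1"
    then have "walk V E x y 1" using walk_gdist[OF assms(1-3)] by simp
    then have "E x y" by (rule walk_1_imp_edge)
    with assms(5) show False ..
  qed
  then show ?thesis using gdist_pos[OF assms(1-4)] by linarith
qed

lemma R1_subset: "R1 V E x y \<subseteq> V"
  by (auto simp: R1_def)

lemma R1_subset_closed_neighbourhoods:
  assumes "graph_connected V E" "x \<in> V" "y \<in> V"
  shows "R1 V E x y \<subseteq> {z. z = x \<or> z = y \<or> E x z \<or> E y z}"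
proof
  fix z assume z: "z \<in> R1 V E x y"
  then have "z \<in> V" by (simp add: R1_def)
  show "z \<in> {z. z = x \<or> z = y \<or> E x z \<or> E y z}"
  proof (rule ccontr)
    assume "z \<notin> {z. z = x \<or> z = y \<or> E x z \<or> E y z}"
    then have "x \<noteq> z" "\<not> E x z" "y \<noteq> z" "\<not> E y z" by blast+
    then have "2 \<le> gdist V E x z" "2 \<le> gdist V E y z"
      using gdist_ge_2[OF assms(1) _ \<open>z \<in> V\<close>] assms(2,3) by simp_all
    then have "tdist1 V E x z = tdist1 V E y z" by (simp add: tdist1_def)
    then show False using z by (simp add: R1_def)
  qed
qed

lemma mem_R1_self:
  assumes "graph_connected V E" "x \<in> V" "y \<in> V" "x \<noteq> y"
  shows "x \<in> R1 V E x y"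
  using gdist_self[OF assms(2)] gdist_pos[OF assms(1,3,2)] assms(2,4)
  by (simp add: R1_def tdist1_def)

lemma trunc1_resolving_fun_const_1:
  assumes "finite V" "graph_connected V E"
  shows "trunc1_resolving_fun V E (\<lambda>_. 1)"
  unfolding trunc1_resolving_fun_def
proof (intro conjI ballI impI)
  fix x y assume "x \<in> V" "y \<in> V" "x \<noteq> y"
  have "finite (R1 V E x y)" using assms(1) R1_subset by (rule finite_subset[rotated])
  moreover have "x \<in> R1 V E x y" using mem_R1_self assms(2) \<open>x \<in> V\<close> \<open>y \<in> V\<close> \<open>x \<noteq> y\<close> .
  ultimately have "1 \<le> card (R1 V E x y)" by (metis card_0_eq empty_iff less_one not_le)
  then show "1 \<le> (\<Sum>z\<in>R1 V E x y. 1::real)" by simp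
qed auto

lemma card_le_sum_trunc1_resolving_fun:
  assumes h: "trunc1_resolving_fun V E h" and "finite V" "finite Q"
    and pairs: "\<forall>q\<in>Q. \<exists>x\<in>V. \<exists>y\<in>V. x \<noteq> y \<and> R1 V E x y \<subseteq> {z\<in>V. g z = q}"
  shows "real (card Q) \<le> sum h V"
proof -
  have h_nonneg: "\<forall>z\<in>V. 0 \<le> h z" using h by (simp add: trunc1_resolving_fun_def)
  have class_mass: "1 \<le> sum h {z\<in>V. g z = q}" if "q \<in> Q" for q
  proof -
    obtain x y where "x \<in> V" "y \<in> V" "x \<noteq> y" and sub: "R1 V E x y \<subseteq> {z\<in>V. g z = q}"
      using pairs \<open>q \<in> Q\<close> by blast
    then have "1 \<le> sum h (R1 V E x y)" using h by (simp add: trunc1_resolving_fun_def)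
    also have "\<dots> \<le> sum h {z\<in>V. g z = q}"
      using sub h_nonneg \<open>finite V\<close> by (intro sum_mono2) auto
    finally show ?thesis .
  qed
  have "real (card Q) \<le> (\<Sum>q\<in>Q. sum h {z\<in>V. g z = q})"
    using sum_mono[OF class_mass] by simp
  also have "\<dots> = (\<Sum>q\<in>Q. sum h {z\<in>{z\<in>V. g z \<in> Q}. g z = q})"
    by (intro sum.cong) auto
  also have "\<dots> = sum h {z\<in>V. g z \<in> Q}"
    using \<open>finite V\<close> \<open>finite Q\<close> by (intro sum.group) auto
  also have "\<dots> \<le> sum h V"
    using h_nonneg \<open>finite V\<close> by (intro sum_mono2) auto
  finally show ?thesis .
qed

lemma frac_trunc1_dim_le:
  assumes "trunc1_resolving_fun V E h"
  shows "frac_trunc1_dim V E \<le> sum h V"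
proof -
  have "bdd_below {sum h V | h. trunc1_resolving_fun V E h}"
    by (rule bdd_belowI[of _ 0]) (auto simp: trunc1_resolving_fun_def intro: sum_nonneg)
  then show ?thesis
    unfolding frac_trunc1_dim_def using assms by (intro cInf_lower) auto
qed

lemma frac_trunc1_dim_ge:
  assumes "trunc1_resolving_fun V E h0"
    and "\<And>h. trunc1_resolving_fun V E h \<Longrightarrow> L \<le> sum h V"
  shows "L \<le> frac_trunc1_dim V E"
  unfolding frac_trunc1_dim_def using assms by (intro cInf_greatest) auto

lemma finite_grid_V: "finite (grid_V s t)"
  by (simp add: grid_V_def cart_V_def path_graph_V_def)

lemma card_grid_V: "card (grid_V s t) = s * t"
  by (simp add: grid_V_def cart_V_def path_graph_V_def card_cartesian_product)

definition manhattan :: "nat \<times> nat \<Rightarrow> nat \<times> nat \<Rightarrow> nat" where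
  "manhattan x y = nat \<bar>int (fst x) - int (fst y)\<bar> + nat \<bar>int (snd x) - int (snd y)\<bar>"

lemma grid_neighbour_closer:
  assumes "x \<in> grid_V s t" "(c, d) \<in> grid_V s t" "x \<noteq> (c, d)"
  obtains y where "y \<in> grid_V s t" "grid_E y (c, d)" "Suc (manhattan x y) = manhattan x (c, d)"
proof -
  obtain a b where x: "x = (a, b)" by force
  have bounds: "a < s" "b < t" "c < s" "d < t"
    using assms x by (auto simp: grid_V_def cart_V_def path_graph_V_def)
  show ?thesis
  proof (cases "d = b")
    case True
    then have "c \<noteq> a" using assms(3) x by auto
    show ?thesis
      by (rule that[of "(if c < a then c + 1 else c - 1, d)"])
        (use bounds True \<open>c \<noteq> a\<close> x in
          \<open>auto simp: grid_V_def cart_V_def path_graph_V_def grid_E_def cart_E_def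
            path_graph_E_def manhattan_def\<close>)
  next
    case False
    show ?thesis
      by (rule that[of "(c, if d < b then d + 1 else d - 1)"])
        (use bounds False x in
          \<open>auto simp: grid_V_def cart_V_def path_graph_V_def grid_E_def cart_E_def
            path_graph_E_def manhattan_def\<close>)
  qed
qed

lemma grid_walk_manhattan:
  assumes "x \<in> grid_V s t" "y \<in> grid_V s t"
  shows "walk (grid_V s t) grid_E x y (manhattan x y)"
  using assms(2)
proof (induction "manhattan x y" arbitrary: y)
  case 0
  then have "y = x" by (auto simp: manhattan_def prod_eq_iff)
  then show ?case using "0.hyps" walk_refl[OF assms(1)] by simp
next
  case (Suc n)
  have "x \<noteq> y" using Suc.hyps(2) by (auto simp: manhattan_def)
  then obtain y' where y': "y' \<in> grid_V s t" "grid_E y' y" "Suc (manhattan x y') = manhattan x y"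
    using grid_neighbour_closer[OF assms(1)] Suc.prems by (metis prod.collapse)
  have "n = manhattan x y'" using y'(3) Suc.hyps(2) by simp
  then have "walk (grid_V s t) grid_E x y' n" using Suc.hyps(1) y'(1) by simp
  then show ?case using walk_snoc y'(2) Suc.prems Suc.hyps(2) by metis
qed

lemma grid_connected: "graph_connected (grid_V s t) grid_E"
  unfolding graph_connected_def using grid_walk_manhattan by blast

lemma grid_V_trunc1_resolving_lower_bound:
  assumes h: "trunc1_resolving_fun (grid_V s t) grid_E h"
  shows "real ((s div 4) * (t div 3)) \<le> sum h (grid_V s t)"
proof -
  define block where "block = (\<lambda>z::nat \<times> nat. (fst z div 4, snd z div 3))"
  have "real (card ({..<s div 4} \<times> {..<t div 3})) \<le> sum h (grid_V s t)"
  proof (rule card_le_sum_trunc1_resolving_fun[OF h finite_grid_V, where g = block])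
    show "\<forall>q\<in>{..<s div 4} \<times> {..<t div 3}. \<exists>x\<in>grid_V s t. \<exists>y\<in>grid_V s t.
            x \<noteq> y \<and> R1 (grid_V s t) grid_E x y \<subseteq> {z \<in> grid_V s t. block z = q}"
    proof
      fix q assume "q \<in> {..<s div 4} \<times> {..<t div 3}"
      then obtain i j where q: "q = (i, j)" "i < s div 4" "j < t div 3" by auto
      define x where "x = (4*i+1, 3*j+1)"
      define y where "y = (4*i+2, 3*j+1)"
      have xy: "x \<in> grid_V s t" "y \<in> grid_V s t"
        using q by (auto simp: x_def y_def grid_V_def cart_V_def path_graph_V_def)
      have "{z. z = x \<or> z = y \<or> grid_E x z \<or> grid_E y z} \<subseteq> {4*i..4*i+3} \<times> {3*j..3*j+2}"
        by (auto simp: x_def y_def grid_E_def cart_E_def path_graph_E_def)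
      also have "\<dots> \<subseteq> {z. block z = q}"
        by (auto simp: block_def q(1) intro!: div_nat_eqI)
      finally have "R1 (grid_V s t) grid_E x y \<subseteq> {z. block z = q}"
        using R1_subset_closed_neighbourhoods[OF grid_connected xy] by (rule subset_trans[rotated])
      moreover have "x \<noteq> y" by (simp add: x_def y_def)
      ultimately show "\<exists>x\<in>grid_V s t. \<exists>y\<in>grid_V s t.
          x \<noteq> y \<and> R1 (grid_V s t) grid_E x y \<subseteq> {z \<in> grid_V s t. block z = q}"
        using xy R1_subset[of "grid_V s t" grid_E x y] by blast
    qed
  qed simp
  then show ?thesis by (simp add: card_cartesian_product)
qed

theorem proposition3p8:
  shows "\<exists>c1 c2 :: real. \<exists>N :: nat. c1 > 0 \<and> c2 > 0 \<and>
    (\<forall>m > N. c1 * \<bar>real m ^ 2\<bar> \<le> \<bar>frac_trunc1_dim (grid_V (4*m) (3*m)) grid_E\<bar> \<and>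
              \<bar>frac_trunc1_dim (grid_V (4*m) (3*m)) grid_E\<bar> \<le> c2 * \<bar>real m ^ 2\<bar>)"
proof (rule exI[of _ 1], rule exI[of _ 12], rule exI[of _ 0], intro conjI allI impI)
  fix m :: nat
  let ?V = "grid_V (4*m) (3*m)"
  have const_1: "trunc1_resolving_fun ?V grid_E (\<lambda>_. 1)"
    using trunc1_resolving_fun_const_1[OF finite_grid_V grid_connected] .
  have "frac_trunc1_dim ?V grid_E \<le> 12 * real m ^ 2"
    using frac_trunc1_dim_le[OF const_1] by (simp add: card_grid_V power2_eq_square)
  moreover have "real m ^ 2 \<le> frac_trunc1_dim ?V grid_E"
    using frac_trunc1_dim_ge[OF const_1 grid_V_trunc1_resolving_lower_bound]
    by (simp add: power2_eq_square)
  ultimately show "1 * \<bar>real m ^ 2\<bar> \<le> \<bar>frac_trunc1_dim ?V grid_E\<bar>"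
    and "\<bar>frac_trunc1_dim ?V grid_E\<bar> \<le> 12 * \<bar>real m ^ 2\<bar>"
    by auto
qed simp_all

end
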